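(* (i) If $\nu$ is a shift-invariant ergodic Borel probability measure on $\Sigma_\alpha$ with $\nu(\{\zeta\in\Sigma_\alpha:\zeta_0=\beta\})<\frac12$, then $\nu(\phi_\alpha(B_\alpha))=1$. (ii) If $\nu$ is a shift-invariant ergodic Borel probability measure on $\Sigma_\beta$ with $\nu(\{\zeta\in\Sigma_\beta:\zeta_0=\alpha\})<\frac12$, then $\nu(\phi_\beta(B_\beta))=1$.
   Context: Fix an integer $M\ge2$ and let $D=\{\alpha_1,\dots,\alpha_M,\beta_1,\dots,\beta_M\}$. Dyck shift. Consider the monoid with zero generated by $D$ with unit $1$ and relations $\alpha_i\beta_j=\delta_{ij}$ (Kronecker delta). The two-sided Dyck shift is $\Sigma_D=\{\omega\in D^{\mathbb Z}:\omega_j\omega_{j+1}\cdots\omega_k\ne0$ in this monoid for all $j<k\}$. Height functions. Let $s(\alpha_k)=1$ and $s(\beta_k)=-1$. For $\omega\in\Sigma_D$, the integers $H_i(\omega)$, $i\in\mathbb Z$, are determined by $H_0=0$ and $H_{i+1}(\omega)-H_i(\omega)=s(\omega_i)$. The sets $B_\alpha,B_\beta$. $B_\alpha$ is the set of $\omega\in\Sigma_D$ such that for every $i\in\mathbb Z$, either $\omega_i\in\{\alpha_1,\dots,\alpha_M\}$, or $\omega_i\in\{\beta_1,\dots,\beta_M\}$ and $H_{i-j+1}(\omega)=H_{i+1}(\omega)$ for some $j\ge1$. $B_\beta$ is the set of $\omega\in\Sigma_D$ such that for every $i$, either $\omega_i\in\{\beta_1,\dots,\beta_M\}$, or $\omega_i\in\{\alpha_1,\dots,\alpha_M\}$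 and $H_{i+j}(\omega)=H_i(\omega)$ for some $j\ge1$. Full shifts. $\Sigma_\alpha=\{\alpha_1,\dots,\alpha_M,\beta\}^{\mathbb Z}$ and $\Sigma_\beta=\{\alpha,\beta_1,\dots,\beta_M\}^{\mathbb Z}$ are full shifts with left shifts. $\phi_\alpha:B_\alpha\to\Sigma_\alpha$ replaces every symbol $\beta_k$ by $\beta$ (keeping $\alpha_k$). $\phi_\beta:B_\beta\to\Sigma_\beta$ replaces every $\alpha_k$ by $\alpha$ (keeping $\beta_k$). *)

theory Defs
  imports "HOL-Probability.Probability"
begin

text \<open>The Dyck alphabet D: DA k = alpha_k, DB k = beta_k, with 1 <= k <= M.\<close>
datatype dsym = DA nat | DB nat

definition Dalph :: "nat \<Rightarrow> dsym set" where
  "Dalph M = {DA k | k. 1 \<le> k \<and> k \<le> M} \<union> {DB k | k. 1 \<le> k \<and> k \<le> M}"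

text \<open>Alphabet of Sigma_alpha: alpha_1..alpha_M and a single symbol beta.\<close>
datatype asym = AA nat | AB

definition Aalph :: "nat \<Rightarrow> asym set" where
  "Aalph M = {AA k | k. 1 \<le> k \<and> k \<le> M} \<union> {AB}"

text \<open>Alphabet of Sigma_beta: a single symbol alpha and beta_1..beta_M.\<close>
datatype bsym = BA | BB nat

definition Balph :: "nat \<Rightarrow> bsym set" where
  "Balph M = {BA} \<union> {BB k | k. 1 \<le> k \<and> k \<le> M}"

text \<open>Elements of the free monoid with an adjoined zero: Some w (a word) or None (zero).
  dyck_eq is the congruence generated by the relations alpha_i beta_j = delta_ij
  (delta = 1 is the empty word, delta = 0 is the zero), together with 0 x = x 0 = 0.\<close>
inductive dyck_eq :: "dsym list option \<Rightarrow> dsym list option \<Rightarrow> bool" where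
  rel: "dyck_eq (Some (u @ [DA i, DB j] @ v))
          (if i = j then Some (u @ v) else None)"
| refl: "dyck_eq x x"
| sym: "dyck_eq x y \<Longrightarrow> dyck_eq y x"
| trans: "dyck_eq x y \<Longrightarrow> dyck_eq y z \<Longrightarrow> dyck_eq x z"

definition word_nonzero :: "dsym list \<Rightarrow> bool" where
  "word_nonzero w \<longleftrightarrow> \<not> dyck_eq (Some w) None"

definition Dyck_shift :: "nat \<Rightarrow> (int \<Rightarrow> dsym) set" where
  "Dyck_shift M = {\<omega>. (\<forall>i. \<omega> i \<in> Dalph M) \<and>
      (\<forall>j k. j < k \<longrightarrow> word_nonzero (map \<omega> [j..k]))}"

definition sgn_sym :: "dsym \<Rightarrow> int" where
  "sgn_sym x = (case x of DA _ \<Rightarrow> 1 | DB _ \<Rightarrow> -1)"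

text \<open>Height function: H 0 = 0 and H (i+1) - H i = s(omega_i).\<close>
definition H :: "(int \<Rightarrow> dsym) \<Rightarrow> int \<Rightarrow> int" where
  "H \<omega> i = (if 0 \<le> i then (\<Sum>k\<in>{0..<i}. sgn_sym (\<omega> k))
             else - (\<Sum>k\<in>{i..<0}. sgn_sym (\<omega> k)))"

definition is_alpha :: "dsym \<Rightarrow> bool" where
  "is_alpha x = (case x of DA _ \<Rightarrow> True | DB _ \<Rightarrow> False)"

definition is_beta :: "dsym \<Rightarrow> bool" where
  "is_beta x = (case x of DA _ \<Rightarrow> False | DB _ \<Rightarrow> True)"

definition B_alpha :: "nat \<Rightarrow> (int \<Rightarrow> dsym) set" where
  "B_alpha M = {\<omega> \<in> Dyck_shift M. \<forall>i. is_alpha (\<omega> i) \<or>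
       (is_beta (\<omega> i) \<and> (\<exists>j\<ge>1. H \<omega> (i - j + 1) = H \<omega> (i + 1)))}"

definition B_beta :: "nat \<Rightarrow> (int \<Rightarrow> dsym) set" where
  "B_beta M = {\<omega> \<in> Dyck_shift M. \<forall>i. is_beta (\<omega> i) \<or>
       (is_alpha (\<omega> i) \<and> (\<exists>j\<ge>1. H \<omega> (i + j) = H \<omega> i))}"

definition phi_alpha :: "(int \<Rightarrow> dsym) \<Rightarrow> (int \<Rightarrow> asym)" where
  "phi_alpha \<omega> = (\<lambda>i. case \<omega> i of DA k \<Rightarrow> AA k | DB _ \<Rightarrow> AB)"

definition phi_beta :: "(int \<Rightarrow> dsym) \<Rightarrow> (int \<Rightarrow> bsym)" where
  "phi_beta \<omega> = (\<lambda>i. case \<omega> i of DA _ \<Rightarrow> BA | DB k \<Rightarrow> BB k)"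

text \<open>Full shifts as measurable spaces: the product sigma-algebra on A^Z (A finite,
  discrete), which coincides with the Borel sigma-algebra of the product topology.\<close>
definition Sigma_alpha :: "nat \<Rightarrow> (int \<Rightarrow> asym) measure" where
  "Sigma_alpha M = PiM UNIV (\<lambda>_. count_space (Aalph M))"

definition Sigma_beta :: "nat \<Rightarrow> (int \<Rightarrow> bsym) measure" where
  "Sigma_beta M = PiM UNIV (\<lambda>_. count_space (Balph M))"

definition shift :: "(int \<Rightarrow> 'a) \<Rightarrow> (int \<Rightarrow> 'a)" where
  "shift \<omega> = (\<lambda>i. \<omega> (i + 1))"

definition shift_invariant :: "(int \<Rightarrow> 'a) measure \<Rightarrow> bool" where
  "shift_invariant \<nu> \<longleftrightarrow> shift \<in> measurable \<nu> \<nu> \<and>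
     (\<forall>A\<in>sets \<nu>. emeasure \<nu> (shift -` A \<inter> space \<nu>) = emeasure \<nu> A)"

definition shift_ergodic :: "(int \<Rightarrow> 'a) measure \<Rightarrow> bool" where
  "shift_ergodic \<nu> \<longleftrightarrow>
     (\<forall>A\<in>sets \<nu>. shift -` A \<inter> space \<nu> = A \<longrightarrow> emeasure \<nu> A = 0 \<or> emeasure \<nu> A = 1)"

end

theory Submission
  imports Defs
begin

text \<open>A point of \<open>\<Sigma>\<^sub>\<alpha>\<close> lies in \<open>\<phi>\<^sub>\<alpha>(B\<^sub>\<alpha>)\<close> exactly when every \<open>\<beta>\<close> is matched, i.e. the height
  walk was already at the level reached after that \<open>\<beta>\<close> at some earlier time. The lift is
  recovered by a stack that pushes the index of each \<open>\<alpha>\<close> and gives each \<open>\<beta>\<close> the index it pops;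
  running the Dyck monoid on such stacks shows that all windows of the lift are nonzero words.

  If \<open>\<nu>(\<beta>) < 1/2\<close>, the steps of the height walk have positive mean. Were the walk bounded below
  on the past with positive probability, by ergodicity it would be almost surely, and the depth of
  the past minimum below the current height would be a finite stationary \<open>\<nat>\<close>-valued variable that
  grows at each shift by at least the current step, contradicting the positive mean. So the past is
  almost surely unbounded below, and the discrete intermediate value theorem matches every \<open>\<beta>\<close>.
  Part (ii) is the same argument reversed in time, with the future in place of the past.\<close>

section \<open>Height functions\<close>

definition walk_height :: "('a \<Rightarrow> int) \<Rightarrow> (int \<Rightarrow> 'a) \<Rightarrow> int \<Rightarrow> int" where
  "walk_height s z i = (if 0 \<le> i then (\<Sum>k\<in>{0..<i}. s (z k)) else - (\<Sum>k\<in>{i..<0}. s (z k)))"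

lemma walk_height_0 [simp]: "walk_height s z 0 = 0"
  by (simp add: walk_height_def)

lemma walk_height_succ: "walk_height s z (i + 1) = walk_height s z i + s (z i)"
proof (cases "0 \<le> i")
  case True
  then have "{0..<i + 1} = insert i {0..<i}" by auto
  with True show ?thesis by (simp add: walk_height_def)
next
  case False
  then have "{i..<0} = insert i {i + 1..<0}" by auto
  with False show ?thesis by (simp add: walk_height_def)
qed

lemma walk_height_1: "walk_height s z 1 = s (z 0)"
  using walk_height_succ[of s z 0] by simp

lemma H_eq_walk_height: "H \<omega> = walk_height sgn_sym \<omega>"
  by (rule ext) (simp add: H_def walk_height_def)

lemma walk_height_unique:
  assumes "G 0 = 0" and "\<And>i. G (i + 1) = G i + s (z i)"
  shows "G i = walk_height s z i"
proof (induction i rule: int_induct[where k = 0])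
  case (step1 i) then show ?case using assms(2)[of i] walk_height_succ[of s z i] by simp
next
  case (step2 i) then show ?case using assms(2)[of "i - 1"] walk_height_succ[of s z "i - 1"] by simp
qed (simp add: assms(1))

lemma walk_height_shift: "walk_height s z (m + 1) = s (z 0) + walk_height s (shift z) m"
proof -
  have "walk_height s z (m + 1) - s (z 0) = walk_height s (shift z) m"
  proof (rule walk_height_unique)
    fix i
    show "walk_height s z (i + 1 + 1) - s (z 0) = walk_height s z (i + 1) - s (z 0) + s (shift z i)"
      using walk_height_succ[of s z "i + 1"] by (simp add: shift_def)
  qed (simp add: walk_height_1)
  then show ?thesis by simp
qed

context
  fixes s :: "'a \<Rightarrow> int"
  assumes unit_steps: "\<And>a. \<bar>s a\<bar> \<le> 1"
begin

lemma walk_height_step_le: "\<bar>walk_height s z (i + 1) - walk_height s z i\<bar> \<le> 1"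
  using walk_height_succ[of s z i] unit_steps[of "z i"] by simp

lemma abs_walk_height_le: "\<bar>walk_height s z m\<bar> \<le> \<bar>m\<bar>"
proof (induction m rule: int_induct[where k = 0])
  case (step1 i) then show ?case using walk_height_step_le[of z i] by simp
next
  case (step2 i) then show ?case using walk_height_step_le[of z "i - 1"] by simp
qed simp

end

lemma int_intermediate_value:
  fixes G :: "int \<Rightarrow> int"
  assumes steps: "\<And>i. \<bar>G (i + 1) - G i\<bar> \<le> 1" and "a \<le> b" "G a \<le> c" "c \<le> G b"
  shows "\<exists>t. a \<le> t \<and> t \<le> b \<and> G t = c"
proof -
  have "\<bar>G (a + int (i + 1)) - G (a + int i)\<bar> \<le> 1" for i
    using steps[of "a + int i"] by (simp add: ac_simps)
  then obtain n where "n \<le> nat (b - a)" "G (a + int n) = c"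
    using nat0_intermed_int_val[of "nat (b - a)" "\<lambda>n. G (a + int n)" c] assms(2-4) by auto
  then show ?thesis using assms(2) by (intro exI[of _ "a + int n"]) auto
qed

lemma int_intermediate_value_down:
  fixes G :: "int \<Rightarrow> int"
  assumes "\<And>i. \<bar>G (i + 1) - G i\<bar> \<le> 1" and "a \<le> b" "c \<le> G a" "G b \<le> c"
  shows "\<exists>t. a \<le> t \<and> t \<le> b \<and> G t = c"
  using int_intermediate_value[of "\<lambda>i. - G i" a b "- c"] assms by (force simp: abs_minus_commute)

lemma Greatest_int_bounded:
  fixes P :: "int \<Rightarrow> bool"
  assumes "P p\<^sub>0" and bound: "\<And>p. P p \<Longrightarrow> p \<le> b"
  shows "P (GREATEST p. P p)" and "P p \<Longrightarrow> p \<le> (GREATEST p. P p)"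
proof -
  define d where "d = (LEAST d::nat. P (b - int d))"
  have "P (b - int (nat (b - p\<^sub>0)))" using assms by simp
  then have Pd: "P (b - int d)" unfolding d_def by (rule LeastI)
  have le: "p \<le> b - int d" if "P p" for p
  proof -
    have "P (b - int (nat (b - p)))" using that bound[OF that] by simp
    then have "d \<le> nat (b - p)" unfolding d_def by (rule Least_le)
    then show ?thesis using bound[OF that] by linarith
  qed
  have "(GREATEST p. P p) = b - int d" by (rule Greatest_equality) (use Pd le in auto)
  then show "P (GREATEST p. P p)" and "P p \<Longrightarrow> p \<le> (GREATEST p. P p)" using Pd le by auto
qed

lemma Least_int_bounded:
  fixes P :: "int \<Rightarrow> bool"
  assumes "P p\<^sub>0" and "\<And>p. P p \<Longrightarrow> b \<le> p"
  shows "P (LEAST p. P p)" and "P p \<Longrightarrow> (LEAST p. P p) \<le> p"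
proof -
  let ?g = "GREATEST q. P (- q)"
  have g: "P (- ?g)" "\<And>q. P (- q) \<Longrightarrow> q \<le> ?g"
    using Greatest_int_bounded[of "\<lambda>q. P (- q)" "- p\<^sub>0" "- b"] assms by force+
  have "(LEAST p. P p) = - ?g" by (rule Least_equality) (use g in \<open>auto simp: minus_le_iff\<close>)
  then show "P (LEAST p. P p)" and "P p \<Longrightarrow> (LEAST p. P p) \<le> p"
    using g(1) g(2)[of "- p"] by auto
qed

section \<open>Stack machines for the Dyck monoid\<close>

fun exec :: "('x \<Rightarrow> 's \<Rightarrow> 's option) \<Rightarrow> 'x list \<Rightarrow> 's \<Rightarrow> 's option" where
  "exec f [] s = Some s"
| "exec f (x # w) s = Option.bind (f x s) (exec f w)"

lemma exec_append: "exec f (u @ v) s = Option.bind (exec f u s) (exec f v)"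
  by (induction u arbitrary: s) (auto simp: bind_eq_None_conv split: Option.bind_splits)

text \<open>The Dyck monoid acts on stacks \<open>\<nat> \<Rightarrow> \<nat>\<close> by partial maps: reading words left to right,
  \<open>\<alpha>\<^sub>i\<close> pushes \<open>i\<close> and \<open>\<beta>\<^sub>j\<close> pops \<open>j\<close>; reading them right to left, the roles are exchanged.
  A word whose action is defined on some stack is therefore nonzero.\<close>

fun alpha_stack_step :: "dsym \<Rightarrow> (nat \<Rightarrow> nat) \<Rightarrow> (nat \<Rightarrow> nat) option" where
  "alpha_stack_step (DA i) s = Some (case_nat i s)"
| "alpha_stack_step (DB j) s = (if s 0 = j then Some (\<lambda>n. s (Suc n)) else None)"

fun beta_stack_step :: "dsym \<Rightarrow> (nat \<Rightarrow> nat) \<Rightarrow> (nat \<Rightarrow> nat) option" where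
  "beta_stack_step (DB j) s = Some (case_nat j s)"
| "beta_stack_step (DA i) s = (if s 0 = i then Some (\<lambda>n. s (Suc n)) else None)"

lemma dyck_eq_exec_alpha_stack:
  "dyck_eq x y \<Longrightarrow> case_option (\<lambda>_. None) (exec alpha_stack_step) x =
                   case_option (\<lambda>_. None) (exec alpha_stack_step) y"
  by (induction rule: dyck_eq.induct) (auto simp: exec_append fun_eq_iff split: Option.bind_splits)

lemma dyck_eq_exec_beta_stack:
  "dyck_eq x y \<Longrightarrow> case_option (\<lambda>_. None) (exec beta_stack_step \<circ> rev) x =
                   case_option (\<lambda>_. None) (exec beta_stack_step \<circ> rev) y"
  by (induction rule: dyck_eq.induct) (auto simp: exec_append fun_eq_iff split: Option.bind_splits)

lemma word_nonzero_if_alpha_stack: "exec alpha_stack_step w s \<noteq> None \<Longrightarrow> word_nonzero w"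
  unfolding word_nonzero_def by (metis dyck_eq_exec_alpha_stack option.simps(4,5))

lemma word_nonzero_if_beta_stack: "exec beta_stack_step (rev w) s \<noteq> None \<Longrightarrow> word_nonzero w"
  unfolding word_nonzero_def by (metis comp_apply dyck_eq_exec_beta_stack option.simps(4,5))

section \<open>The image of \<open>B\<^sub>\<alpha>\<close>\<close>

definition down_steps_matched :: "('a \<Rightarrow> int) \<Rightarrow> (int \<Rightarrow> 'a) \<Rightarrow> bool" where
  "down_steps_matched s z \<longleftrightarrow>
     (\<forall>i. s (z i) = -1 \<longrightarrow> (\<exists>j\<ge>1. walk_height s z (i - j + 1) = walk_height s z (i + 1)))"

fun asym_sign :: "asym \<Rightarrow> int" where
  "asym_sign (AA _) = 1"
| "asym_sign AB = -1"

fun asym_index :: "asym \<Rightarrow> nat" where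
  "asym_index (AA k) = k"
| "asym_index AB = 0"

lemma abs_asym_sign: "\<bar>asym_sign a\<bar> \<le> 1"
  by (cases a) auto

lemma asym_sign_phi_alpha [simp]: "asym_sign (phi_alpha \<omega> i) = sgn_sym (\<omega> i)"
  by (cases "\<omega> i") (auto simp: phi_alpha_def sgn_sym_def)

lemma walk_height_phi_alpha: "walk_height asym_sign (phi_alpha \<omega>) = H \<omega>"
  by (rule ext) (simp add: H_eq_walk_height walk_height_def)

lemma space_Sigma_alpha: "space (Sigma_alpha M) = {z. \<forall>i. z i \<in> Aalph M}"
  by (auto simp: Sigma_alpha_def space_PiM PiE_def Pi_def)

lemma phi_alpha_image_subset:
  "phi_alpha ` B_alpha M \<subseteq> {z \<in> space (Sigma_alpha M). down_steps_matched asym_sign z}"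
proof safe
  fix \<omega> assume \<omega>: "\<omega> \<in> B_alpha M"
  have D: "\<omega> i \<in> Dalph M" for i using \<omega> by (auto simp: B_alpha_def Dyck_shift_def)
  have "phi_alpha \<omega> i \<in> Aalph M" for i
    using D[of i] by (cases "\<omega> i") (auto simp: Dalph_def Aalph_def phi_alpha_def)
  then show "phi_alpha \<omega> \<in> space (Sigma_alpha M)" by (simp add: space_Sigma_alpha)
  have "\<not> is_alpha (\<omega> i)" if "sgn_sym (\<omega> i) = -1" for i
    using that by (cases "\<omega> i") (auto simp: is_alpha_def sgn_sym_def)
  with \<omega> show "down_steps_matched asym_sign (phi_alpha \<omega>)"
    by (auto simp: down_steps_matched_def walk_height_phi_alpha B_alpha_def)
qed

text \<open>The \<open>n\<close>-th entry from the top of the stack of unmatched \<open>\<alpha>\<close>'s before time \<open>t\<close> is the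
  last \<open>\<alpha>\<close> before \<open>t\<close> that starts at height \<open>H t - n - 1\<close>.\<close>

definition open_alpha_pos :: "(int \<Rightarrow> asym) \<Rightarrow> int \<Rightarrow> nat \<Rightarrow> int" where
  "open_alpha_pos z t n =
     (GREATEST p. p < t \<and> walk_height asym_sign z p = walk_height asym_sign z t - int n - 1)"

definition alpha_stack :: "(int \<Rightarrow> asym) \<Rightarrow> int \<Rightarrow> nat \<Rightarrow> nat" where
  "alpha_stack z t n = asym_index (z (open_alpha_pos z t n))"

definition alpha_lift :: "(int \<Rightarrow> asym) \<Rightarrow> int \<Rightarrow> dsym" where
  "alpha_lift z i = (case z i of AA k \<Rightarrow> DA k | AB \<Rightarrow> DB (alpha_stack z i 0))"

lemma phi_alpha_alpha_lift: "phi_alpha (alpha_lift z) = z"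
  by (rule ext) (simp add: phi_alpha_def alpha_lift_def split: asym.split)

lemma open_alpha_pos_up:
  assumes "z t = AA k"
  shows "open_alpha_pos z (t + 1) 0 = t"
    and "open_alpha_pos z (t + 1) (Suc n) = open_alpha_pos z t n"
proof -
  let ?H = "walk_height asym_sign z"
  have h: "?H (t + 1) = ?H t + 1" using walk_height_succ[of asym_sign z t] assms by simp
  show "open_alpha_pos z (t + 1) 0 = t"
    unfolding open_alpha_pos_def by (rule Greatest_equality) (auto simp: h)
  show "open_alpha_pos z (t + 1) (Suc n) = open_alpha_pos z t n"
    unfolding open_alpha_pos_def by (rule arg_cong[where f = Greatest]) (auto simp: h fun_eq_iff le_less)
qed

lemma open_alpha_pos_down:
  assumes "z t = AB"
  shows "open_alpha_pos z (t + 1) n = open_alpha_pos z t (Suc n)"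
proof -
  let ?H = "walk_height asym_sign z"
  have h: "?H (t + 1) = ?H t - 1" using walk_height_succ[of asym_sign z t] assms by simp
  show ?thesis
    unfolding open_alpha_pos_def by (rule arg_cong[where f = Greatest]) (auto simp: h fun_eq_iff le_less)
qed

lemma alpha_stack_step_lift:
  "alpha_stack_step (alpha_lift z t) (alpha_stack z t) = Some (alpha_stack z (t + 1))"
proof (cases "z t")
  case (AA k)
  then have "alpha_stack z (t + 1) = case_nat k (alpha_stack z t)"
    by (auto simp: fun_eq_iff alpha_stack_def open_alpha_pos_up split: nat.split)
  with AA show ?thesis by (simp add: alpha_lift_def)
next
  case AB
  then have "alpha_stack z (t + 1) = (\<lambda>n. alpha_stack z t (Suc n))"
    by (simp add: fun_eq_iff alpha_stack_def open_alpha_pos_down)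
  with AB show ?thesis by (simp add: alpha_lift_def)
qed

lemma exec_alpha_stack_lift:
  "exec alpha_stack_step (map (alpha_lift z) [a..a + int n - 1]) (alpha_stack z a)
     = Some (alpha_stack z (a + int n))"
proof (induction n arbitrary: a)
  case (Suc n)
  have "[a..a + int (Suc n) - 1] = a # [a + 1..(a + 1) + int n - 1]"
    by (subst upto_rec1) auto
  then show ?case using Suc[of "a + 1"] alpha_stack_step_lift[of z a] by (simp add: algebra_simps)
qed simp

lemma open_alpha_pos_matched:
  assumes "down_steps_matched asym_sign z" and "z i = AB"
  shows "\<exists>k. z (open_alpha_pos z i 0) = AA k"
proof -
  let ?H = "walk_height asym_sign z" and ?g = "open_alpha_pos z i 0"
  have Hi: "?H (i + 1) = ?H i - 1" using walk_height_succ[of asym_sign z i] assms(2) by simp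
  have "\<exists>j\<ge>1. ?H (i - j + 1) = ?H (i + 1)"
    using assms unfolding down_steps_matched_def by simp
  then obtain j where j: "j \<ge> 1" "?H (i - j + 1) = ?H i - 1" using Hi by auto
  then have "i - j + 1 < i" by (cases "j = 1") auto
  then have g: "?g < i" "?H ?g = ?H i - 1" "\<And>p. p < i \<Longrightarrow> ?H p = ?H i - 1 \<Longrightarrow> p \<le> ?g"
    using Greatest_int_bounded[of "\<lambda>p. p < i \<and> ?H p = ?H i - 1" "i - j + 1" i] j
    unfolding open_alpha_pos_def by auto
  have "z ?g \<noteq> AB"
  proof
    assume "z ?g = AB"
    then have "?H (?g + 1) \<le> ?H i - 1" using walk_height_succ[of asym_sign z ?g] g(2) by simp
    then obtain t where t: "?g + 1 \<le> t" "t \<le> i" "?H t = ?H i - 1"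
      using int_intermediate_value[of ?H "?g + 1" i "?H i - 1"] g(1)
        walk_height_step_le[of asym_sign, OF abs_asym_sign] by auto
    then show False using g(3)[of t] by (cases "t = i") auto
  qed
  then show ?thesis by (cases "z ?g") auto
qed

lemma alpha_lift_in_B_alpha:
  assumes z: "z \<in> space (Sigma_alpha M)" and matched: "down_steps_matched asym_sign z"
  shows "alpha_lift z \<in> B_alpha M"
proof -
  have zs: "z p \<in> Aalph M" for p using z by (simp add: space_Sigma_alpha)
  have letters: "alpha_lift z i \<in> Dalph M" for i
  proof (cases "z i")
    case AB
    then obtain k where "z (open_alpha_pos z i 0) = AA k" using open_alpha_pos_matched[OF matched] by blast
    with AB zs[of "open_alpha_pos z i 0"] show ?thesis
      by (auto simp: alpha_lift_def alpha_stack_def Dalph_def Aalph_def)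
  qed (use zs[of i] in \<open>auto simp: alpha_lift_def Dalph_def Aalph_def\<close>)
  have nonzero: "word_nonzero (map (alpha_lift z) [j..k])" if "j < k" for j k
  proof -
    have "[j..k] = [j..j + int (nat (k - j + 1)) - 1]" using that by simp
    then have "exec alpha_stack_step (map (alpha_lift z) [j..k]) (alpha_stack z j) \<noteq> None"
      using exec_alpha_stack_lift[of z j "nat (k - j + 1)"] by simp
    then show ?thesis by (rule word_nonzero_if_alpha_stack)
  qed
  have H: "H (alpha_lift z) = walk_height asym_sign z"
    using walk_height_phi_alpha[of "alpha_lift z"] by (simp add: phi_alpha_alpha_lift)
  have "is_alpha (alpha_lift z i) \<or> is_beta (alpha_lift z i) \<and>
          (\<exists>j\<ge>1. H (alpha_lift z) (i - j + 1) = H (alpha_lift z) (i + 1))" for i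
    using matched by (cases "z i") (auto simp: alpha_lift_def is_alpha_def is_beta_def H down_steps_matched_def)
  with letters nonzero show ?thesis by (simp add: B_alpha_def Dyck_shift_def)
qed

lemma phi_alpha_image:
  "phi_alpha ` B_alpha M = {z \<in> space (Sigma_alpha M). down_steps_matched asym_sign z}"
proof
  show "{z \<in> space (Sigma_alpha M). down_steps_matched asym_sign z} \<subseteq> phi_alpha ` B_alpha M"
  proof safe
    fix z assume "z \<in> space (Sigma_alpha M)" "down_steps_matched asym_sign z"
    then have "alpha_lift z \<in> B_alpha M" by (rule alpha_lift_in_B_alpha)
    then show "z \<in> phi_alpha ` B_alpha M" using phi_alpha_alpha_lift[of z] by (metis image_eqI)
  qed
qed (rule phi_alpha_image_subset)

section \<open>The image of \<open>B\<^sub>\<beta>\<close>\<close>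

definition up_steps_matched :: "('a \<Rightarrow> int) \<Rightarrow> (int \<Rightarrow> 'a) \<Rightarrow> bool" where
  "up_steps_matched s z \<longleftrightarrow>
     (\<forall>i. s (z i) = 1 \<longrightarrow> (\<exists>j\<ge>1. walk_height s z (i + j) = walk_height s z i))"

fun bsym_sign :: "bsym \<Rightarrow> int" where
  "bsym_sign BA = 1"
| "bsym_sign (BB _) = -1"

fun bsym_index :: "bsym \<Rightarrow> nat" where
  "bsym_index (BB k) = k"
| "bsym_index BA = 0"

lemma abs_bsym_sign: "\<bar>bsym_sign b\<bar> \<le> 1"
  by (cases b) auto

lemma bsym_sign_phi_beta [simp]: "bsym_sign (phi_beta \<omega> i) = sgn_sym (\<omega> i)"
  by (cases "\<omega> i") (auto simp: phi_beta_def sgn_sym_def)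

lemma walk_height_phi_beta: "walk_height bsym_sign (phi_beta \<omega>) = H \<omega>"
  by (rule ext) (simp add: H_eq_walk_height walk_height_def)

lemma space_Sigma_beta: "space (Sigma_beta M) = {z. \<forall>i. z i \<in> Balph M}"
  by (auto simp: Sigma_beta_def space_PiM PiE_def Pi_def)

lemma phi_beta_image_subset:
  "phi_beta ` B_beta M \<subseteq> {z \<in> space (Sigma_beta M). up_steps_matched bsym_sign z}"
proof safe
  fix \<omega> assume \<omega>: "\<omega> \<in> B_beta M"
  have D: "\<omega> i \<in> Dalph M" for i using \<omega> by (auto simp: B_beta_def Dyck_shift_def)
  have "phi_beta \<omega> i \<in> Balph M" for i
    using D[of i] by (cases "\<omega> i") (auto simp: Dalph_def Balph_def phi_beta_def)
  then show "phi_beta \<omega> \<in> space (Sigma_beta M)" by (simp add: space_Sigma_beta)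
  have "\<not> is_beta (\<omega> i)" if "sgn_sym (\<omega> i) = 1" for i
    using that by (cases "\<omega> i") (auto simp: is_beta_def sgn_sym_def)
  with \<omega> show "up_steps_matched bsym_sign (phi_beta \<omega>)"
    by (auto simp: up_steps_matched_def walk_height_phi_beta B_beta_def)
qed

text \<open>Reading right to left, the \<open>n\<close>-th entry from the top of the stack of unmatched \<open>\<beta>\<close>'s
  at time \<open>t\<close> is the first \<open>\<beta>\<close> at or after \<open>t\<close> that ends at height \<open>H t - n - 1\<close>.\<close>

definition close_beta_pos :: "(int \<Rightarrow> bsym) \<Rightarrow> int \<Rightarrow> nat \<Rightarrow> int" where
  "close_beta_pos z t n =
     (LEAST q. t \<le> q \<and> walk_height bsym_sign z (q + 1) = walk_height bsym_sign z t - int n - 1)"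

definition beta_stack :: "(int \<Rightarrow> bsym) \<Rightarrow> int \<Rightarrow> nat \<Rightarrow> nat" where
  "beta_stack z t n = bsym_index (z (close_beta_pos z t n))"

definition beta_lift :: "(int \<Rightarrow> bsym) \<Rightarrow> int \<Rightarrow> dsym" where
  "beta_lift z i = (case z i of BB k \<Rightarrow> DB k | BA \<Rightarrow> DA (beta_stack z (i + 1) 0))"

lemma phi_beta_beta_lift: "phi_beta (beta_lift z) = z"
  by (rule ext) (simp add: phi_beta_def beta_lift_def split: bsym.split)

lemma close_beta_pos_down:
  assumes "z t = BB k"
  shows "close_beta_pos z t 0 = t"
    and "close_beta_pos z t (Suc n) = close_beta_pos z (t + 1) n"
proof -
  let ?H = "walk_height bsym_sign z"
  have h: "?H (t + 1) = ?H t - 1" using walk_height_succ[of bsym_sign z t] assms by simp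
  show "close_beta_pos z t 0 = t"
    unfolding close_beta_pos_def by (rule Least_equality) (auto simp: h)
  show "close_beta_pos z t (Suc n) = close_beta_pos z (t + 1) n"
    unfolding close_beta_pos_def by (rule arg_cong[where f = Least]) (auto simp: h fun_eq_iff le_less)
qed

lemma close_beta_pos_up:
  assumes "z t = BA"
  shows "close_beta_pos z t n = close_beta_pos z (t + 1) (Suc n)"
proof -
  let ?H = "walk_height bsym_sign z"
  have h: "?H (t + 1) = ?H t + 1" using walk_height_succ[of bsym_sign z t] assms by simp
  show ?thesis
    unfolding close_beta_pos_def by (rule arg_cong[where f = Least]) (auto simp: h fun_eq_iff le_less)
qed

lemma beta_stack_step_lift:
  "beta_stack_step (beta_lift z t) (beta_stack z (t + 1)) = Some (beta_stack z t)"
proof (cases "z t")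
  case (BB k)
  then have "beta_stack z t = case_nat k (beta_stack z (t + 1))"
    by (auto simp: fun_eq_iff beta_stack_def close_beta_pos_down split: nat.split)
  with BB show ?thesis by (simp add: beta_lift_def)
next
  case BA
  then have "beta_stack z t = (\<lambda>n. beta_stack z (t + 1) (Suc n))"
    by (simp add: fun_eq_iff beta_stack_def close_beta_pos_up)
  with BA show ?thesis by (simp add: beta_lift_def)
qed

lemma exec_beta_stack_lift:
  "exec beta_stack_step (rev (map (beta_lift z) [a..a + int n - 1])) (beta_stack z (a + int n))
     = Some (beta_stack z a)"
proof (induction n arbitrary: a)
  case (Suc n)
  have "[a..a + int (Suc n) - 1] = a # [a + 1..(a + 1) + int n - 1]"
    by (subst upto_rec1) auto
  then show ?case
    using Suc[of "a + 1"] beta_stack_step_lift[of z a] by (simp add: exec_append algebra_simps)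
qed simp

lemma close_beta_pos_matched:
  assumes "up_steps_matched bsym_sign z" and "z i = BA"
  shows "\<exists>k. z (close_beta_pos z (i + 1) 0) = BB k"
proof -
  let ?H = "walk_height bsym_sign z" and ?g = "close_beta_pos z (i + 1) 0"
  have Hi: "?H (i + 1) = ?H i + 1" using walk_height_succ[of bsym_sign z i] assms(2) by simp
  have "\<exists>j\<ge>1. ?H (i + j) = ?H i"
    using assms unfolding up_steps_matched_def by simp
  then obtain j where j: "j \<ge> 1" "?H (i + j) = ?H i" by auto
  then have "i + 1 \<le> i + j - 1" using Hi by (cases "j = 1") auto
  then have g: "i + 1 \<le> ?g" "?H (?g + 1) = ?H i" "\<And>q. i + 1 \<le> q \<Longrightarrow> ?H (q + 1) = ?H i \<Longrightarrow> ?g \<le> q"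
    using Least_int_bounded[of "\<lambda>q. i + 1 \<le> q \<and> ?H (q + 1) = ?H i" "i + j - 1" "i + 1"] j Hi
    unfolding close_beta_pos_def by auto
  have "z ?g \<noteq> BA"
  proof
    assume "z ?g = BA"
    then have "?H ?g \<le> ?H i" using walk_height_succ[of bsym_sign z ?g] g(2) by simp
    then obtain t where t: "i + 1 \<le> t" "t \<le> ?g" "?H t = ?H i"
      using int_intermediate_value_down[of ?H "i + 1" ?g "?H i"] g(1) Hi
        walk_height_step_le[of bsym_sign, OF abs_bsym_sign] by auto
    then show False using g(3)[of "t - 1"] Hi by (cases "t = i + 1") auto
  qed
  then show ?thesis by (cases "z ?g") auto
qed

lemma beta_lift_in_B_beta:
  assumes z: "z \<in> space (Sigma_beta M)" and matched: "up_steps_matched bsym_sign z"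
  shows "beta_lift z \<in> B_beta M"
proof -
  have zs: "z p \<in> Balph M" for p using z by (simp add: space_Sigma_beta)
  have letters: "beta_lift z i \<in> Dalph M" for i
  proof (cases "z i")
    case BA
    then obtain k where "z (close_beta_pos z (i + 1) 0) = BB k"
      using close_beta_pos_matched[OF matched] by blast
    with BA zs[of "close_beta_pos z (i + 1) 0"] show ?thesis
      by (auto simp: beta_lift_def beta_stack_def Dalph_def Balph_def)
  qed (use zs[of i] in \<open>auto simp: beta_lift_def Dalph_def Balph_def\<close>)
  have nonzero: "word_nonzero (map (beta_lift z) [j..k])" if "j < k" for j k
  proof -
    have "[j..k] = [j..j + int (nat (k - j + 1)) - 1]" using that by simp
    then have "exec beta_stack_step (rev (map (beta_lift z) [j..k]))
                 (beta_stack z (j + int (nat (k - j + 1)))) \<noteq> None"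
      using exec_beta_stack_lift[of z j "nat (k - j + 1)"] by simp
    then show ?thesis by (rule word_nonzero_if_beta_stack)
  qed
  have H: "H (beta_lift z) = walk_height bsym_sign z"
    using walk_height_phi_beta[of "beta_lift z"] by (simp add: phi_beta_beta_lift)
  have "is_beta (beta_lift z i) \<or> is_alpha (beta_lift z i) \<and>
          (\<exists>j\<ge>1. H (beta_lift z) (i + j) = H (beta_lift z) i)" for i
    using matched by (cases "z i") (auto simp: beta_lift_def is_alpha_def is_beta_def H up_steps_matched_def)
  with letters nonzero show ?thesis by (simp add: B_beta_def Dyck_shift_def)
qed

lemma phi_beta_image:
  "phi_beta ` B_beta M = {z \<in> space (Sigma_beta M). up_steps_matched bsym_sign z}"
proof
  show "{z \<in> space (Sigma_beta M). up_steps_matched bsym_sign z} \<subseteq> phi_beta ` B_beta M"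
  proof safe
    fix z assume "z \<in> space (Sigma_beta M)" "up_steps_matched bsym_sign z"
    then have "beta_lift z \<in> B_beta M" by (rule beta_lift_in_B_beta)
    then show "z \<in> phi_beta ` B_beta M" using phi_beta_beta_lift[of z] by (metis image_eqI)
  qed
qed (rule phi_beta_image_subset)

section \<open>Increments of identically distributed variables\<close>

lemma integral_nonpos_if_increment:
  fixes x y :: "'b \<Rightarrow> nat" and r :: "'b \<Rightarrow> real"
  assumes "prob_space M"
    and x[measurable]: "x \<in> measurable M (count_space UNIV)"
    and y[measurable]: "y \<in> measurable M (count_space UNIV)"
    and same_distr: "distr M (count_space UNIV) x = distr M (count_space UNIV) y"
    and r[measurable]: "r \<in> borel_measurable M" and r_bound: "\<And>\<omega>. \<omega> \<in> space M \<Longrightarrow> \<bar>r \<omega>\<bar> \<le> 1"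
    and increment: "AE \<omega> in M. real (x \<omega>) + r \<omega> \<le> real (y \<omega>)"
  shows "(\<integral>\<omega>. r \<omega> \<partial>M) \<le> 0"
proof -
  \<comment> \<open>The truncations \<open>min x N\<close> and \<open>min y N\<close> have equal means, and \<open>min y N - min x N \<ge> r\<close>
     except on \<open>{x \<ge> N}\<close>, where it is still \<open>\<ge> r - 2\<close>.\<close>
  interpret prob_space M by fact
  define A where "A N = {\<omega> \<in> space M. N \<le> x \<omega>}" for N
  have A_sets[measurable]: "A N \<in> sets M" for N unfolding A_def by measurable
  have truncated_eq: "(\<integral>\<omega>. min (real (y \<omega>)) (real N) \<partial>M) = (\<integral>\<omega>. min (real (x \<omega>)) (real N) \<partial>M)" for N
    using integral_distr[OF x, of "\<lambda>n. min (real n) (real N)"]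
      integral_distr[OF y, of "\<lambda>n. min (real n) (real N)"] same_distr by simp
  have bound: "(\<integral>\<omega>. r \<omega> \<partial>M) \<le> 2 * measure M (A N)" for N
  proof -
    have bounded: "integrable M f"
      if "f \<in> borel_measurable M" "\<And>\<omega>. \<omega> \<in> space M \<Longrightarrow> \<bar>f \<omega>\<bar> \<le> B" for f :: "'b \<Rightarrow> real" and B
      using that by (intro integrable_const_bound[where B = B]) auto
    have integrable_trunc: "integrable M (\<lambda>\<omega>. min (real (x \<omega>)) (real N))" "integrable M (\<lambda>\<omega>. min (real (y \<omega>)) (real N))"
      by (auto intro!: bounded[of _ "real N"])
    have integrable_r: "integrable M r" "integrable M (indicator (A N) :: _ \<Rightarrow> real)"
      by (auto intro!: bounded[of _ 1] r_bound)
    have "AE \<omega> in M. r \<omega> - 2 * indicator (A N) \<omega> \<le> min (real (y \<omega>)) N - min (real (x \<omega>)) N"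
      using increment
    proof (rule AE_mp, intro AE_I2 impI)
      fix \<omega> assume \<omega>: "\<omega> \<in> space M" and inc: "real (x \<omega>) + r \<omega> \<le> real (y \<omega>)"
      have "x \<omega> < N \<Longrightarrow> real (x \<omega>) + 1 \<le> real N" by linarith
      then show "r \<omega> - 2 * indicator (A N) \<omega> \<le> min (real (y \<omega>)) N - min (real (x \<omega>)) N"
        using inc r_bound[OF \<omega>] \<omega> by (auto simp: A_def indicator_def min_def abs_le_iff)
    qed
    then have "(\<integral>\<omega>. r \<omega> - 2 * indicator (A N) \<omega> \<partial>M)
        \<le> (\<integral>\<omega>. min (real (y \<omega>)) N - min (real (x \<omega>)) N \<partial>M)"
      using integrable_trunc integrable_r by (intro integral_mono_AE) auto
    then show ?thesis using integrable_trunc integrable_r truncated_eq[of N] by (simp add: sets.Int_space_eq2)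
  qed
  have "range A \<subseteq> sets M" "decseq A" using A_sets by (auto simp: decseq_def A_def)
  moreover have "(\<Inter>N. A N) = {}"
    by (auto simp: A_def) (metis Suc_n_not_le_n)
  ultimately have "(\<lambda>N. measure M (A N)) \<longlonglongrightarrow> 0"
    using finite_Lim_measure_decseq[of A] by simp
  then have "(\<lambda>N. 2 * measure M (A N)) \<longlonglongrightarrow> 0"
    by (simp add: tendsto_mult_right_zero)
  then show ?thesis using bound by (intro LIMSEQ_le_const[where X = "\<lambda>N. 2 * measure M (A N)"]) auto
qed

section \<open>Walks driven by an ergodic shift\<close>

locale ergodic_shift_walk = prob_space \<nu>
  for \<nu> :: "(int \<Rightarrow> 'a) measure" +
  fixes A :: "'a set" and s :: "'a \<Rightarrow> int"
  assumes sets_eq: "sets \<nu> = sets (PiM UNIV (\<lambda>_. count_space A))"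
    and invariant: "shift_invariant \<nu>"
    and ergodic: "shift_ergodic \<nu>"
    and unit_steps: "\<And>a. \<bar>s a\<bar> \<le> 1"
begin

lemma coordinate_measurable[measurable]: "(\<lambda>z. z k) \<in> measurable \<nu> (count_space A)"
  using measurable_component_singleton[of k UNIV "\<lambda>_. count_space A"]
  by (simp add: measurable_cong_sets[OF sets_eq HOL.refl])

lemma coordinate_eq_pred[measurable]: "Measurable.pred \<nu> (\<lambda>z. z k = c)"
  by (rule measurable_compose[OF coordinate_measurable]) (simp add: measurable_count_space_eq1)

lemma step_measurable[measurable]: "(\<lambda>z. real_of_int (s (z k))) \<in> borel_measurable \<nu>"
  by (rule measurable_compose[OF coordinate_measurable]) (simp add: measurable_count_space_eq1)

lemma walk_height_measurable[measurable]: "(\<lambda>z. real_of_int (walk_height s z m)) \<in> borel_measurable \<nu>"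
  unfolding walk_height_def by (cases "0 \<le> m") (simp_all add: of_int_sum)

lemma walk_height_eq_pred[measurable]: "Measurable.pred \<nu> (\<lambda>z. walk_height s z a = walk_height s z b)"
proof -
  have "{z \<in> space \<nu>. real_of_int (walk_height s z a) = real_of_int (walk_height s z b)} \<in> sets \<nu>"
    by (intro borel_measurable_eq walk_height_measurable)
  then show ?thesis unfolding pred_def by simp
qed

lemma step_eq_pred[measurable]: "Measurable.pred \<nu> (\<lambda>z. s (z k) = c)"
proof -
  have "Measurable.pred \<nu> (\<lambda>z. real_of_int (s (z k)) = real_of_int c)" by measurable
  then show ?thesis by simp
qed

lemma shift_measurable[measurable]: "shift \<in> measurable \<nu> \<nu>"
  using invariant by (simp add: shift_invariant_def)

lemma shift_in_space: "z \<in> space \<nu> \<Longrightarrow> shift z \<in> space \<nu>"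
  using measurable_space[OF shift_measurable] .

lemma distr_comp_shift:
  assumes "f \<in> measurable \<nu> N"
  shows "distr \<nu> N (\<lambda>z. f (shift z)) = distr \<nu> N f"
proof -
  have "distr \<nu> \<nu> shift = \<nu>"
    using invariant by (intro measure_eqI) (auto simp: shift_invariant_def emeasure_distr)
  then show ?thesis using distr_distr[OF assms shift_measurable] by (simp add: comp_def)
qed

lemma integral_step_two_valued:
  assumes "\<And>a. s a = (if a = c then d else e)"
  shows "(\<integral>z. real_of_int (s (z 0)) \<partial>\<nu>) = e + (d - e) * measure \<nu> {z \<in> space \<nu>. z 0 = c}"
proof -
  let ?S = "{z \<in> space \<nu>. z 0 = c}"
  have [measurable]: "?S \<in> sets \<nu>" by measurable
  have "(\<integral>z. real_of_int (s (z 0)) \<partial>\<nu>) = (\<integral>z. real_of_int e + real_of_int (d - e) * indicator ?S z \<partial>\<nu>)"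
    by (rule Bochner_Integration.integral_cong) (auto simp: assms indicator_def)
  also have "\<dots> = e + (d - e) * measure \<nu> ?S"
    by (subst Bochner_Integration.integral_add) (auto simp: sets.Int_space_eq2 prob_space emeasure_eq_measure)
  finally show ?thesis by simp
qed

lemma invariant_null_if_increment:
  assumes E: "E \<in> sets \<nu>" "shift -` E \<inter> space \<nu> = E"
    and x: "x \<in> measurable \<nu> (count_space UNIV)" and y: "y \<in> measurable \<nu> (count_space UNIV)"
    and same_distr: "distr \<nu> (count_space UNIV) x = distr \<nu> (count_space UNIV) y"
    and r: "r \<in> borel_measurable \<nu>" "\<And>z. z \<in> space \<nu> \<Longrightarrow> \<bar>r z\<bar> \<le> 1"
    and increment: "\<And>z. z \<in> E \<Longrightarrow> real (x z) + r z \<le> real (y z)"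
    and drift: "(\<integral>z. r z \<partial>\<nu>) > 0"
  shows "emeasure \<nu> E = 0"
proof (rule ccontr)
  assume "emeasure \<nu> E \<noteq> 0"
  then have "prob E = 1" using ergodic E by (auto simp: shift_ergodic_def emeasure_eq_measure)
  then have "AE z in \<nu>. real (x z) + r z \<le> real (y z)"
    using increment by (auto dest: AE_prob_1 elim: AE_mp)
  then have "(\<integral>z. r z \<partial>\<nu>) \<le> 0"
    using integral_nonpos_if_increment[OF prob_space_axioms x y same_distr r] by simp
  with drift show False by simp
qed

definition past_bounded_by :: "(int \<Rightarrow> 'a) \<Rightarrow> nat \<Rightarrow> bool" where
  "past_bounded_by z n \<longleftrightarrow> (\<forall>m\<le>0. - int n \<le> walk_height s z m)"

definition past_bound :: "(int \<Rightarrow> 'a) \<Rightarrow> nat" where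
  "past_bound z = (LEAST n. past_bounded_by z n)"

definition past_bounded :: "(int \<Rightarrow> 'a) set" where
  "past_bounded = {z \<in> space \<nu>. \<exists>n. past_bounded_by z n}"

lemma past_bounded_by_pred[measurable]: "Measurable.pred \<nu> (\<lambda>z. past_bounded_by z n)"
proof -
  have "past_bounded_by z n \<longleftrightarrow> (\<forall>m::int. m \<le> 0 \<longrightarrow> - real n \<le> real_of_int (walk_height s z m))" for z
    unfolding past_bounded_by_def by (metis of_int_le_iff of_int_minus of_int_of_nat_eq)
  moreover have "Measurable.pred \<nu> (\<lambda>z. \<forall>m::int. m \<le> 0 \<longrightarrow> - real n \<le> real_of_int (walk_height s z m))"
    by (rule pred_intros_countable(1)) measurable
  ultimately show ?thesis by simp
qed

lemma past_bounded_sets[measurable]: "past_bounded \<in> sets \<nu>"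
  unfolding past_bounded_def by measurable

lemma past_bound_measurable[measurable]: "past_bound \<in> measurable \<nu> (count_space UNIV)"
  unfolding past_bound_def by measurable

lemma past_bounded_by_shift: "past_bounded_by z n \<Longrightarrow> past_bounded_by (shift z) (n + 1)"
  unfolding past_bounded_by_def
proof (intro allI impI)
  fix m :: int assume bound: "\<forall>m\<le>0. - int n \<le> walk_height s z m" and "m \<le> 0"
  show "- int (n + 1) \<le> walk_height s (shift z) m"
  proof (cases "m = 0")
    case False
    then show ?thesis
      using bound[rule_format, of "m + 1"] \<open>m \<le> 0\<close> walk_height_shift[of s z m] unit_steps[of "z 0"]
      by auto
  qed simp
qed

lemma past_bounded_by_unshift:
  assumes "past_bounded_by (shift z) k"
  shows "int k \<ge> s (z 0)" and "past_bounded_by z (nat (int k - s (z 0)))"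
proof -
  have shifted: "- int k \<le> walk_height s z (m + 1) - s (z 0)" if "m \<le> 0" for m
    using assms that walk_height_shift[of s z m] unfolding past_bounded_by_def by simp
  from shifted[of "-1"] show "int k \<ge> s (z 0)" by simp
  with shifted[of "m - 1" for m] show "past_bounded_by z (nat (int k - s (z 0)))"
    unfolding past_bounded_by_def by (simp add: le_diff_eq)
qed

lemma past_bounded_invariant: "shift -` past_bounded \<inter> space \<nu> = past_bounded"
  unfolding past_bounded_def using past_bounded_by_shift past_bounded_by_unshift(2) shift_in_space by blast

lemma past_bound_le: "past_bounded_by z n \<Longrightarrow> past_bound z \<le> n"
  unfolding past_bound_def by (rule Least_le)

lemma past_bounded_by_past_bound: "past_bounded_by z n \<Longrightarrow> past_bounded_by z (past_bound z)"
  unfolding past_bound_def by (rule LeastI)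

lemma past_bound_increment:
  assumes "z \<in> past_bounded"
  shows "real (past_bound z) + s (z 0) \<le> real (past_bound (shift z))"
proof -
  obtain n where "past_bounded_by z n" using assms unfolding past_bounded_def by auto
  then have k: "past_bounded_by (shift z) (past_bound (shift z))"
    by (rule past_bounded_by_past_bound[OF past_bounded_by_shift])
  have "past_bound z \<le> nat (int (past_bound (shift z)) - s (z 0))"
    by (intro past_bound_le past_bounded_by_unshift(2)[OF k])
  moreover have "s (z 0) \<le> int (past_bound (shift z))" by (rule past_bounded_by_unshift(1)[OF k])
  ultimately show ?thesis by linarith
qed

lemma past_bounded_null:
  assumes "(\<integral>z. real_of_int (s (z 0)) \<partial>\<nu>) > 0"
  shows "emeasure \<nu> past_bounded = 0"
proof (rule invariant_null_if_increment[OF past_bounded_sets past_bounded_invariant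
      past_bound_measurable measurable_compose[OF shift_measurable past_bound_measurable] _
      step_measurable _ past_bound_increment assms])
  show "distr \<nu> (count_space UNIV) past_bound = distr \<nu> (count_space UNIV) (\<lambda>z. past_bound (shift z))"
    by (simp add: distr_comp_shift)
  show "\<bar>real_of_int (s (z 0))\<bar> \<le> 1" for z using unit_steps[of "z 0"] by simp
qed

lemma down_steps_matched_if_past_unbounded:
  assumes "\<And>n. \<not> past_bounded_by z n"
  shows "down_steps_matched s z"
  unfolding down_steps_matched_def
proof (intro allI impI)
  fix i assume down: "s (z i) = -1"
  let ?H = "walk_height s z"
  obtain m where m: "m \<le> 0" "?H m < - (\<bar>i\<bar> + \<bar>?H (i + 1)\<bar> + 1)"
    using assms[of "nat (\<bar>i\<bar> + \<bar>?H (i + 1)\<bar> + 1)"] unfolding past_bounded_by_def by force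
  have "m \<le> i"
    using m abs_walk_height_le[of s z m, OF unit_steps] by linarith
  moreover have "?H (i + 1) = ?H i - 1" using walk_height_succ[of s z i] down by simp
  ultimately obtain t where "m \<le> t" "t \<le> i" "?H t = ?H (i + 1)"
    using int_intermediate_value[of ?H m i "?H (i + 1)"] m walk_height_step_le[of s, OF unit_steps] by force
  then show "\<exists>j\<ge>1. ?H (i - j + 1) = ?H (i + 1)" by (intro exI[of _ "i - t + 1"]) simp
qed

definition future_bounded_by :: "(int \<Rightarrow> 'a) \<Rightarrow> nat \<Rightarrow> bool" where
  "future_bounded_by z n \<longleftrightarrow> (\<forall>m\<ge>0. - int n \<le> walk_height s z m)"

definition future_bound :: "(int \<Rightarrow> 'a) \<Rightarrow> nat" where
  "future_bound z = (LEAST n. future_bounded_by z n)"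

definition future_bounded :: "(int \<Rightarrow> 'a) set" where
  "future_bounded = {z \<in> space \<nu>. \<exists>n. future_bounded_by z n}"

lemma future_bounded_by_pred[measurable]: "Measurable.pred \<nu> (\<lambda>z. future_bounded_by z n)"
proof -
  have "future_bounded_by z n \<longleftrightarrow> (\<forall>m::int. 0 \<le> m \<longrightarrow> - real n \<le> real_of_int (walk_height s z m))" for z
    unfolding future_bounded_by_def by (metis of_int_le_iff of_int_minus of_int_of_nat_eq)
  moreover have "Measurable.pred \<nu> (\<lambda>z. \<forall>m::int. 0 \<le> m \<longrightarrow> - real n \<le> real_of_int (walk_height s z m))"
    by (rule pred_intros_countable(1)) measurable
  ultimately show ?thesis by simp
qed

lemma future_bounded_sets[measurable]: "future_bounded \<in> sets \<nu>"
  unfolding future_bounded_def by measurable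

lemma future_bound_measurable[measurable]: "future_bound \<in> measurable \<nu> (count_space UNIV)"
  unfolding future_bound_def by measurable

lemma future_bounded_by_shift:
  assumes "future_bounded_by z n"
  shows "int n + s (z 0) \<ge> 0" and "future_bounded_by (shift z) (nat (int n + s (z 0)))"
proof -
  have bound: "- int n \<le> walk_height s z (m + 1)" if "m \<ge> -1" for m
    using assms that unfolding future_bounded_by_def by simp
  from bound[of 0] show "int n + s (z 0) \<ge> 0" by (simp add: walk_height_1)
  with bound walk_height_shift[of s z] show "future_bounded_by (shift z) (nat (int n + s (z 0)))"
    unfolding future_bounded_by_def by (simp add: algebra_simps)
qed

lemma future_bounded_by_unshift: "future_bounded_by (shift z) k \<Longrightarrow> future_bounded_by z (k + 1)"
  unfolding future_bounded_by_def
proof (intro allI impI)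
  fix m :: int assume bound: "\<forall>m\<ge>0. - int k \<le> walk_height s (shift z) m" and "0 \<le> m"
  show "- int (k + 1) \<le> walk_height s z m"
  proof (cases "m = 0")
    case False
    then show ?thesis
      using bound[rule_format, of "m - 1"] \<open>0 \<le> m\<close> walk_height_shift[of s z "m - 1"] unit_steps[of "z 0"]
      by auto
  qed simp
qed

lemma future_bounded_invariant: "shift -` future_bounded \<inter> space \<nu> = future_bounded"
  unfolding future_bounded_def using future_bounded_by_shift(2) future_bounded_by_unshift shift_in_space by blast

lemma future_bound_le: "future_bounded_by z n \<Longrightarrow> future_bound z \<le> n"
  unfolding future_bound_def by (rule Least_le)

lemma future_bounded_by_future_bound: "future_bounded_by z n \<Longrightarrow> future_bounded_by z (future_bound z)"
  unfolding future_bound_def by (rule LeastI)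

lemma future_bound_increment:
  assumes "z \<in> future_bounded"
  shows "real (future_bound (shift z)) + - real_of_int (s (z 0)) \<le> real (future_bound z)"
proof -
  obtain n where "future_bounded_by z n" using assms unfolding future_bounded_def by auto
  then have k: "future_bounded_by z (future_bound z)" by (rule future_bounded_by_future_bound)
  have "future_bound (shift z) \<le> nat (int (future_bound z) + s (z 0))"
    by (intro future_bound_le future_bounded_by_shift(2)[OF k])
  moreover have "int (future_bound z) + s (z 0) \<ge> 0" by (rule future_bounded_by_shift(1)[OF k])
  ultimately show ?thesis by linarith
qed

lemma future_bounded_null:
  assumes "(\<integral>z. real_of_int (s (z 0)) \<partial>\<nu>) < 0"
  shows "emeasure \<nu> future_bounded = 0"
proof (rule invariant_null_if_increment[OF future_bounded_sets future_bounded_invariant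
      measurable_compose[OF shift_measurable future_bound_measurable] future_bound_measurable _
      borel_measurable_uminus[OF step_measurable] _ future_bound_increment])
  show "distr \<nu> (count_space UNIV) (\<lambda>z. future_bound (shift z)) = distr \<nu> (count_space UNIV) future_bound"
    by (simp add: distr_comp_shift)
  show "\<bar>- real_of_int (s (z 0))\<bar> \<le> 1" for z using unit_steps[of "z 0"] by simp
  show "(\<integral>z. - real_of_int (s (z 0)) \<partial>\<nu>) > 0" using assms by simp
qed

lemma up_steps_matched_if_future_unbounded:
  assumes "\<And>n. \<not> future_bounded_by z n"
  shows "up_steps_matched s z"
  unfolding up_steps_matched_def
proof (intro allI impI)
  fix i assume up: "s (z i) = 1"
  let ?H = "walk_height s z"
  obtain m where m: "0 \<le> m" "?H m < - (\<bar>i\<bar> + \<bar>?H i\<bar> + 1)"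
    using assms[of "nat (\<bar>i\<bar> + \<bar>?H i\<bar> + 1)"] unfolding future_bounded_by_def by force
  have "i + 1 \<le> m"
    using m abs_walk_height_le[of s z m, OF unit_steps] by linarith
  moreover have "?H (i + 1) = ?H i + 1" using walk_height_succ[of s z i] up by simp
  ultimately obtain t where "i + 1 \<le> t" "t \<le> m" "?H t = ?H i"
    using int_intermediate_value_down[of ?H "i + 1" m "?H i"] m walk_height_step_le[of s, OF unit_steps] by force
  then show "\<exists>j\<ge>1. ?H (i + j) = ?H i" by (intro exI[of _ "t - i"]) simp
qed

lemma down_steps_matched_pred[measurable]: "Measurable.pred \<nu> (down_steps_matched s)"
  unfolding down_steps_matched_def
proof (rule pred_intros_countable(1), rule pred_intros_logic(4)[OF step_eq_pred], rule pred_intros_countable(2))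
  show "Measurable.pred \<nu> (\<lambda>z. 1 \<le> j \<and> walk_height s z (i - j + 1) = walk_height s z (i + 1))"
    for i j :: int by (rule pred_intros_conj1', rule walk_height_eq_pred)
qed

lemma up_steps_matched_pred[measurable]: "Measurable.pred \<nu> (up_steps_matched s)"
  unfolding up_steps_matched_def
proof (rule pred_intros_countable(1), rule pred_intros_logic(4)[OF step_eq_pred], rule pred_intros_countable(2))
  show "Measurable.pred \<nu> (\<lambda>z. 1 \<le> j \<and> walk_height s z (i + j) = walk_height s z i)"
    for i j :: int by (rule pred_intros_conj1', rule walk_height_eq_pred)
qed

end

lemma emeasure_phi_alpha_image:
  assumes sets: "sets \<nu> = sets (Sigma_alpha M)" and "prob_space \<nu>"
    and "shift_invariant \<nu>" and "shift_ergodic \<nu>"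
    and few_beta: "measure \<nu> {z \<in> space \<nu>. z 0 = AB} < 1/2"
  shows "emeasure \<nu> (phi_alpha ` B_alpha M) = 1"
proof -
  interpret ergodic_shift_walk \<nu> "Aalph M" asym_sign
    by (intro ergodic_shift_walk.intro ergodic_shift_walk_axioms.intro)
      (use assms abs_asym_sign in \<open>simp_all add: Sigma_alpha_def\<close>)
  have "asym_sign a = (if a = AB then -1 else 1)" for a by (cases a) auto
  from integral_step_two_valued[OF this] few_beta
  have "(\<integral>z. real_of_int (asym_sign (z 0)) \<partial>\<nu>) > 0" by simp
  then have null: "past_bounded \<in> null_sets \<nu>"
    using past_bounded_null past_bounded_sets by blast
  have image: "phi_alpha ` B_alpha M = {z \<in> space \<nu>. down_steps_matched asym_sign z}"
    using sets_eq_imp_space_eq[OF sets] by (simp add: phi_alpha_image)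
  have "AE z in \<nu>. down_steps_matched asym_sign z"
    using down_steps_matched_if_past_unbounded by (intro AE_I'[OF null]) (auto simp: past_bounded_def)
  then show ?thesis unfolding image by (intro emeasure_eq_1_AE) auto
qed

lemma emeasure_phi_beta_image:
  assumes sets: "sets \<nu> = sets (Sigma_beta M)" and "prob_space \<nu>"
    and "shift_invariant \<nu>" and "shift_ergodic \<nu>"
    and few_alpha: "measure \<nu> {z \<in> space \<nu>. z 0 = BA} < 1/2"
  shows "emeasure \<nu> (phi_beta ` B_beta M) = 1"
proof -
  interpret ergodic_shift_walk \<nu> "Balph M" bsym_sign
    by (intro ergodic_shift_walk.intro ergodic_shift_walk_axioms.intro)
      (use assms abs_bsym_sign in \<open>simp_all add: Sigma_beta_def\<close>)
  have "bsym_sign b = (if b = BA then 1 else -1)" for b by (cases b) auto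
  from integral_step_two_valued[OF this] few_alpha
  have "(\<integral>z. real_of_int (bsym_sign (z 0)) \<partial>\<nu>) < 0" by simp
  then have null: "future_bounded \<in> null_sets \<nu>"
    using future_bounded_null future_bounded_sets by blast
  have image: "phi_beta ` B_beta M = {z \<in> space \<nu>. up_steps_matched bsym_sign z}"
    using sets_eq_imp_space_eq[OF sets] by (simp add: phi_beta_image)
  have "AE z in \<nu>. up_steps_matched bsym_sign z"
    using up_steps_matched_if_future_unbounded by (intro AE_I'[OF null]) (auto simp: future_bounded_def)
  then show ?thesis unfolding image by (intro emeasure_eq_1_AE) auto
qed

theorem mainTheorem6:
  fixes M :: nat
  assumes "M \<ge> 2"
  shows "(\<forall>\<nu> :: (int \<Rightarrow> asym) measure.
            sets \<nu> = sets (Sigma_alpha M) \<and> prob_space \<nu> \<and>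
            shift_invariant \<nu> \<and> shift_ergodic \<nu> \<and>
            measure \<nu> {\<zeta> \<in> space \<nu>. \<zeta> 0 = AB} < 1/2
          \<longrightarrow> emeasure \<nu> (phi_alpha ` B_alpha M) = 1)
       \<and> (\<forall>\<nu> :: (int \<Rightarrow> bsym) measure.
            sets \<nu> = sets (Sigma_beta M) \<and> prob_space \<nu> \<and>
            shift_invariant \<nu> \<and> shift_ergodic \<nu> \<and>
            measure \<nu> {\<zeta> \<in> space \<nu>. \<zeta> 0 = BA} < 1/2
          \<longrightarrow> emeasure \<nu> (phi_beta ` B_beta M) = 1)"
  using emeasure_phi_alpha_image emeasure_phi_beta_image by blast

end
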